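(* Let $\mathcal P=(R_1,R_2,\ldots,R_k)$ be distinct rows of a binary matrix such that the overlap graph of $\{R_1,\ldots,R_k\}$ is the path $R_1-R_2-\cdots-R_k$ (i.e., $R_i$ and $R_j$ overlap if and only if $|i-j|=1$), the set $\{R_1,\ldots,R_k\}$ has the consecutive-ones property, and let $Z$ be a further row such that $\{R_1,\ldots,R_k,Z\}$ does not have the consecutive-ones property. Assume that every Tucker submatrix of the matrix with rows $\{R_1,\ldots,R_k,Z\}$ has at least five rows. Let $j$ be the least index such that $\{R_1,\ldots,R_j,Z\}$ does not have the consecutive-ones property, and then let $i\le j$ be the greatest index such that $\{R_i,R_{i+1},\ldots,R_j,Z\}$ does not have the consecutive-ones property. Then $\{R_i,\ldots,R_j,Z\}$ is a minimal set of rows without the consecutive-ones property: it does not have the consecutive-ones property, but every proper subset of it does.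
   Context: Each row is identified with the set of columns in which it has a 1. A set of rows has the consecutive-ones property if there is an ordering of all columns such that in each of these rows the 1's are consecutive. Two rows overlap if they intersect and neither is a subset of the other; the overlap graph of a set of rows has an edge between each pair of overlapping rows. A Tucker submatrix is a submatrix (subset of rows and columns) without the consecutive-ones property such that deleting any single row or column yields a matrix with the consecutive-ones property. *)

theory Defs
  imports Main
begin

text \<open>Rows are identified with the sets of columns in which they have a 1.
  U is the (finite) set of all columns of the matrix.\<close>

definition C1P :: "'c set \<Rightarrow> 'c set set \<Rightarrow> bool" where
  "C1P U A \<longleftrightarrow> (\<exists>f :: 'c \<Rightarrow> nat. inj_on f U \<and>
     (\<forall>X\<in>A. \<forall>x\<in>X. \<forall>y\<in>X. \<forall>c\<in>U. f x \<le> f c \<and> f c \<le> f y \<longrightarrow> c \<in> X))"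

definition overlap :: "'c set \<Rightarrow> 'c set \<Rightarrow> bool" where
  "overlap A B \<longleftrightarrow> A \<inter> B \<noteq> {} \<and> \<not> A \<subseteq> B \<and> \<not> B \<subseteq> A"

definition sub_C1P :: "'c set set \<Rightarrow> 'c set \<Rightarrow> bool" where
  "sub_C1P S C \<longleftrightarrow> C1P C ((\<lambda>X. X \<inter> C) ` S)"

definition tucker_sub :: "'c set \<Rightarrow> 'c set set \<Rightarrow> 'c set set \<Rightarrow> 'c set \<Rightarrow> bool" where
  "tucker_sub U M S C \<longleftrightarrow> S \<subseteq> M \<and> C \<subseteq> U \<and> \<not> sub_C1P S C \<and>
     (\<forall>X\<in>S. sub_C1P (S - {X}) C) \<and> (\<forall>c\<in>C. sub_C1P S (C - {c}))"

end

theory Submission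
  imports Defs "HOL-Library.Product_Lexorder"
begin

(* The set {R_i, ..., R_j, Z} fails to be C1P by the choice of i, and removing
   Z, R_j or R_i leaves a subset of R_1..R_k, of R_1..R_(j-1) plus Z, or of R_(i+1)..R_j plus Z,
   all C1P by the extremal choice of j and i.  The real work is removing an interior row R_m:
   then F = {R_i..R_(m-1)} and G = {R_(m+1)..R_j} are overlap-connected families, no member of
   F overlaps a member of G, and F + Z, G + Z are both C1P.  The gluing lemma glue_C1P shows
   that F + G + Z is then C1P.

   Two such families are nested: the union W of one of them, say F,
   is contained in or disjoint from every member of G.  One first shows that W + Z + G is C1P
   (C1P_insert_nested_block: W is contracted into a block and placed right after a suitable
   element of Z), and then substitutes for the block W an ordering of W that realises F + Z
   (C1P_substitute).  Orderings are manipulated concretely: a C1P ordering is any injective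
   map into a linear order under which every row is consecutive, and splice g W p h is the
   ordering that keeps g outside W and inserts W, ordered by h, right after position p. *)

definition consecutive :: "('c \<Rightarrow> 'b::linorder) \<Rightarrow> 'c set \<Rightarrow> 'c set \<Rightarrow> bool" where
  "consecutive f V X \<longleftrightarrow> (\<forall>x\<in>X. \<forall>y\<in>X. \<forall>c\<in>V. f x \<le> f c \<and> f c \<le> f y \<longrightarrow> c \<in> X)"

lemma consecutive_subset: "consecutive f V X \<Longrightarrow> V' \<subseteq> V \<Longrightarrow> consecutive f V' X"
  unfolding consecutive_def by blast

lemma consecutive_reverse [simp]: "consecutive (\<lambda>c. - (f c :: int)) V X \<longleftrightarrow> consecutive f V X"
  unfolding consecutive_def by auto

lemma consecutiveD:
  "consecutive f V X \<Longrightarrow> x \<in> X \<Longrightarrow> y \<in> X \<Longrightarrow> c \<in> V \<Longrightarrow> f x \<le> f c \<Longrightarrow> f c \<le> f y \<Longrightarrow> c \<in> X"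
  unfolding consecutive_def by blast

lemma consecutive_between:
  "consecutive f V X \<Longrightarrow> x \<in> X \<Longrightarrow> y \<in> X \<Longrightarrow> c \<in> V \<Longrightarrow> f x < f c \<Longrightarrow> f c < f y \<Longrightarrow> c \<in> X"
  unfolding consecutive_def by (meson less_imp_le)

lemma consecutive_either:
  "consecutive f V X \<Longrightarrow> x \<in> X \<Longrightarrow> y \<in> X \<Longrightarrow> c \<in> V \<Longrightarrow>
    f x \<le> f c \<and> f c \<le> f y \<or> f y \<le> f c \<and> f c \<le> f x \<Longrightarrow> c \<in> X"
  unfolding consecutive_def by blast

lemma consecutive_outside:
  fixes g :: "'c \<Rightarrow> 'b::linorder"
  assumes "consecutive g V X" "c \<in> V" "c \<notin> X"
  shows "(\<forall>x\<in>X. g x < g c) \<or> (\<forall>x\<in>X. g c < g x)"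
  using assms unfolding consecutive_def by (meson linorder_not_le)

lemma inj_on_reverse: "inj_on (g :: 'c \<Rightarrow> int) U \<Longrightarrow> inj_on (\<lambda>c. - g c) U"
  unfolding inj_on_def by simp

lemma C1P_int_order:
  assumes "C1P U A"
  obtains g :: "'c \<Rightarrow> int" where "inj_on g U" "\<forall>X\<in>A. consecutive g U X"
proof -
  obtain f :: "'c \<Rightarrow> nat" where f: "inj_on f U \<and>
      (\<forall>X\<in>A. \<forall>x\<in>X. \<forall>y\<in>X. \<forall>c\<in>U. f x \<le> f c \<and> f c \<le> f y \<longrightarrow> c \<in> X)"
    using assms unfolding C1P_def by (rule exE)
  have "inj_on (\<lambda>c. int (f c)) U" using f unfolding inj_on_def by simp
  moreover have "\<forall>X\<in>A. consecutive (\<lambda>c. int (f c)) U X"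
    using f unfolding consecutive_def of_nat_le_iff by blast
  ultimately show thesis by (rule that)
qed

(* Conversely, any injective ordering of the finite column set into a linear order in which
   every row is an interval witnesses C1P (rank the columns to obtain a map into nat). *)
lemma C1P_by_order:
  fixes f :: "'c \<Rightarrow> 'b::linorder"
  assumes U: "finite U" and inj: "inj_on f U"
    and cons: "\<forall>X\<in>A. consecutive f U X" and sub: "\<forall>X\<in>A. X \<subseteq> U"
  shows "C1P U A"
proof -
  define r where "r c = card {d\<in>U. f d < f c}" for c
  have lt: "r c < r d" if "c \<in> U" "d \<in> U" "f c < f d" for c d
  proof -
    have "{e\<in>U. f e < f c} \<subset> {e\<in>U. f e < f d}" using that by auto
    then show ?thesis unfolding r_def using U by (intro psubset_card_mono) auto
  qed
  have le: "r c \<le> r d \<longleftrightarrow> f c \<le> f d" if "c \<in> U" "d \<in> U" for c d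
  proof (cases rule: linorder_cases[of "f c" "f d"])
    case equal
    then have "r c = r d" by (simp add: r_def)
    then show ?thesis using equal by simp
  qed (use lt[OF that] lt[OF that(2,1)] in auto)
  have "inj_on r U"
  proof (rule inj_onI)
    fix x y assume xy: "x \<in> U" "y \<in> U" "r x = r y"
    then have "f x = f y" using le[of x y] le[of y x] by auto
    then show "x = y" using inj xy by (meson inj_onD)
  qed
  moreover have "\<forall>X\<in>A. \<forall>x\<in>X. \<forall>y\<in>X. \<forall>c\<in>U. r x \<le> r c \<and> r c \<le> r y \<longrightarrow> c \<in> X"
  proof (intro ballI impI)
    fix X x y c assume X: "X \<in> A" and xyc: "x \<in> X" "y \<in> X" "c \<in> U" "r x \<le> r c \<and> r c \<le> r y"
    then have "x \<in> U" "y \<in> U" using sub by auto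
    then have "f x \<le> f c" "f c \<le> f y" using le xyc by auto
    then show "c \<in> X" using consecutiveD[OF cons[rule_format, OF X]] xyc by blast
  qed
  ultimately show ?thesis unfolding C1P_def by blast
qed

lemma C1P_subset:
  fixes U :: "'c set"
  assumes "C1P U A" "B \<subseteq> A"
  shows "C1P U B"
proof -
  obtain f :: "'c \<Rightarrow> nat" where f: "inj_on f U \<and>
      (\<forall>X\<in>A. \<forall>x\<in>X. \<forall>y\<in>X. \<forall>c\<in>U. f x \<le> f c \<and> f c \<le> f y \<longrightarrow> c \<in> X)"
    using assms(1) unfolding C1P_def by (rule exE)
  then show ?thesis unfolding C1P_def using assms(2) by (intro exI[of _ f]) blast
qed

(* A single row is always C1P: put its columns first. *)
lemma C1P_singleton:
  fixes U :: "'c set"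
  assumes "finite U" "Z \<subseteq> U"
  shows "C1P U {Z}"
proof -
  obtain f :: "'c \<Rightarrow> nat" where f: "inj_on f U"
    using finite_imp_inj_to_nat_seg[OF assms(1)] by blast
  define ord where "ord c = (c \<notin> Z, f c)" for c
  have "inj_on ord U" using f unfolding ord_def inj_on_def by simp
  moreover have "consecutive ord U Z"
    unfolding consecutive_def
  proof (intro ballI impI)
    fix x y c assume "x \<in> Z" "y \<in> Z" "ord x \<le> ord c \<and> ord c \<le> ord y"
    then show "c \<in> Z" by (cases "c \<in> Z") (simp_all add: ord_def)
  qed
  ultimately show ?thesis using C1P_by_order[OF assms(1), of ord "{Z}"] assms(2) by blast
qed

(* Y has elements at or before position p and elements strictly after it, so a block
   inserted right after p would cut Y. *)
definition straddles :: "('c \<Rightarrow> int) \<Rightarrow> 'c set \<Rightarrow> int \<Rightarrow> bool" where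
  "straddles g Y p \<longleftrightarrow> (\<exists>x\<in>Y. \<exists>y\<in>Y. g x \<le> p \<and> p < g y)"

(* The ordering that keeps g outside W and inserts the block W, internally ordered by h,
   immediately after the columns c with g c <= p.  Doubling makes room for the block. *)
definition splice :: "('c \<Rightarrow> int) \<Rightarrow> 'c set \<Rightarrow> int \<Rightarrow> ('c \<Rightarrow> 'b::linorder) \<Rightarrow> 'c \<Rightarrow> int \<times> 'b" where
  "splice g W p h c = (if c \<in> W then (2 * p + 1, h c) else (2 * g c, h c))"

lemma splice_le:
  "c \<notin> W \<Longrightarrow> c' \<notin> W \<Longrightarrow> splice g W p h c \<le> splice g W p h c' \<Longrightarrow> g c \<le> g c'"
  "c \<in> W \<Longrightarrow> c' \<notin> W \<Longrightarrow> splice g W p h c \<le> splice g W p h c' \<longleftrightarrow> p < g c'"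
  "c \<notin> W \<Longrightarrow> c' \<in> W \<Longrightarrow> splice g W p h c \<le> splice g W p h c' \<longleftrightarrow> g c \<le> p"
  "c \<in> W \<Longrightarrow> c' \<in> W \<Longrightarrow> splice g W p h c \<le> splice g W p h c' \<longleftrightarrow> h c \<le> h c'"
  subgoal by (auto simp: splice_def)
  subgoal by (simp add: splice_def) linarith
  subgoal by (simp add: splice_def) linarith
  subgoal by (simp add: splice_def)
  done

lemma splice_inj:
  assumes "inj_on g U" "inj_on h W"
  shows "inj_on (splice g W p h) U"
proof (rule inj_onI)
  fix c c' assume cc': "c \<in> U" "c' \<in> U" "splice g W p h c = splice g W p h c'"
  have odd: "2 * g d \<noteq> 2 * p + 1" for d by presburger
  show "c = c'"
  proof (cases "c \<in> W"; cases "c' \<in> W")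
    assume "c \<in> W" "c' \<in> W"
    then show "c = c'" using cc' assms(2) by (simp add: splice_def inj_on_eq_iff)
  next
    assume "c \<notin> W" "c' \<notin> W"
    then show "c = c'" using cc' assms(1) by (simp add: splice_def inj_on_eq_iff)
  qed (use cc' odd in \<open>auto simp: splice_def\<close>)
qed

lemma splice_disjoint:
  assumes "X \<inter> W = {}" "consecutive g (U - W) X" "\<not> straddles g X p"
  shows "consecutive (splice g W p h) U X"
  unfolding consecutive_def
proof (intro ballI impI)
  fix x y c assume xyc: "x \<in> X" "y \<in> X" "c \<in> U"
    and le: "splice g W p h x \<le> splice g W p h c \<and> splice g W p h c \<le> splice g W p h y"
  have out: "x \<notin> W" "y \<notin> W" using assms(1) xyc by auto
  show "c \<in> X"
  proof (cases "c \<in> W")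
    case True
    then have "g x \<le> p" "p < g y"
      using le by (simp_all add: splice_le(3)[OF out(1) True] splice_le(2)[OF True out(2)])
    then show ?thesis using assms(3) xyc unfolding straddles_def by blast
  next
    case False
    then have "g x \<le> g c" "g c \<le> g y"
      using splice_le(1)[OF out(1) False] splice_le(1)[OF False out(2)] le by blast+
    then show ?thesis using consecutiveD[OF assms(2)] xyc False by blast
  qed
qed

lemma splice_inside:
  assumes "X \<subseteq> W" "consecutive h W X"
  shows "consecutive (splice g W p h) U X"
  unfolding consecutive_def
proof (intro ballI impI)
  fix x y c assume xyc: "x \<in> X" "y \<in> X" "c \<in> U"
    and le: "splice g W p h x \<le> splice g W p h c \<and> splice g W p h c \<le> splice g W p h y"
  have inW: "x \<in> W" "y \<in> W" using assms(1) xyc by auto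
  show "c \<in> X"
  proof (cases "c \<in> W")
    case True
    then have "h x \<le> h c" "h c \<le> h y"
      using le by (simp_all add: splice_le(4)[OF inW(1) True] splice_le(4)[OF True inW(2)])
    then show ?thesis using consecutiveD[OF assms(2)] xyc True by blast
  next
    case False
    then show ?thesis
      using le by (auto simp add: splice_le(2)[OF inW(1) False] splice_le(3)[OF False inW(2)])
  qed
qed

lemma splice_no_gap:
  assumes cons: "consecutive g (U - W) X"
    and gap: "\<forall>x\<in>X - W. \<forall>c\<in>U - W - X. \<not> (g x \<le> g c \<and> g c \<le> p) \<and> \<not> (p < g c \<and> g c \<le> g x)"
    and xyc: "x \<in> X" "y \<in> X" "c \<in> U - W - X"
    and le: "splice g W p h x \<le> splice g W p h c \<and> splice g W p h c \<le> splice g W p h y"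
  shows False
proof -
  have c: "c \<notin> W" using xyc by blast
  show False
  proof (cases "x \<in> W"; cases "y \<in> W")
    assume "x \<in> W" "y \<in> W"
    then show False using le by (auto simp add: splice_le(2)[OF _ c] splice_le(3)[OF c])
  next
    assume "x \<in> W" "y \<notin> W"
    then have "p < g c" using le by (simp add: splice_le(2)[OF _ c])
    moreover have "g c \<le> g y" using splice_le(1)[OF c \<open>y \<notin> W\<close>] le by blast
    ultimately show False using gap xyc \<open>y \<notin> W\<close> by blast
  next
    assume "x \<notin> W" "y \<in> W"
    then have "g c \<le> p" using le by (simp add: splice_le(3)[OF c])
    moreover have "g x \<le> g c" using splice_le(1)[OF \<open>x \<notin> W\<close> c] le by blast
    ultimately show False using gap xyc \<open>x \<notin> W\<close> by blast
  next
    assume "x \<notin> W" "y \<notin> W"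
    then have "g x \<le> g c" "g c \<le> g y" using splice_le(1)[OF _ c] splice_le(1)[OF c] le by blast+
    then show False using consecutiveD[OF cons] xyc by blast
  qed
qed

lemma splice_containing:
  assumes "W \<subseteq> X" "consecutive g (U - W) X"
    and "\<forall>x\<in>X - W. \<forall>c\<in>U - W - X. \<not> (g x \<le> g c \<and> g c \<le> p) \<and> \<not> (p < g c \<and> g c \<le> g x)"
  shows "consecutive (splice g W p h) U X"
  unfolding consecutive_def
proof (intro ballI impI; rule ccontr)
  fix x y c assume "x \<in> X" "y \<in> X" "c \<in> U" "c \<notin> X"
    and "splice g W p h x \<le> splice g W p h c \<and> splice g W p h c \<le> splice g W p h y"
  then show False using splice_no_gap[OF assms(2,3)] assms(1) by blast
qed

lemma splice_crossing:
  assumes cons: "consecutive g (U - W) X" and before: "\<forall>x\<in>X - W. g x \<le> p"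
    and gap: "\<forall>x\<in>X - W. \<forall>c\<in>U - W - X. \<not> (g x \<le> g c \<and> g c \<le> p)"
    and prefix: "\<forall>w\<in>X \<inter> W. \<forall>w'\<in>W - X. h w < h w'"
  shows "consecutive (splice g W p h) U X"
  unfolding consecutive_def
proof (intro ballI impI; rule ccontr)
  fix x y c assume xyc: "x \<in> X" "y \<in> X" "c \<in> U" "c \<notin> X"
    and le: "splice g W p h x \<le> splice g W p h c \<and> splice g W p h c \<le> splice g W p h y"
  show False
  proof (cases "c \<in> W")
    case c: True
    show False
    proof (cases "y \<in> W")
      case True
      then have "h c \<le> h y" using le by (simp add: splice_le(4)[OF c])
      moreover have "h y < h c" using prefix xyc True c by blast
      ultimately show False by simp
    next
      case False
      then have "p < g y" using le by (simp add: splice_le(2)[OF c])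
      moreover have "g y \<le> p" using before xyc False by blast
      ultimately show False by simp
    qed
  next
    case False
    have "\<forall>x\<in>X - W. \<forall>c\<in>U - W - X. \<not> (g x \<le> g c \<and> g c \<le> p) \<and> \<not> (p < g c \<and> g c \<le> g x)"
      using gap before by fastforce
    then show False using splice_no_gap[OF cons _ _ _ _ le] xyc False by blast
  qed
qed

(* A family of rows is overlap-connected if its overlap graph is connected: every nonempty
   subfamily closed under overlapping neighbours is everything. *)
definition overlap_connected :: "'c set set \<Rightarrow> bool" where
  "overlap_connected F \<longleftrightarrow>
     (\<forall>S\<subseteq>F. S \<noteq> {} \<longrightarrow> (\<forall>X\<in>S. \<forall>Y\<in>F. overlap X Y \<longrightarrow> Y \<in> S) \<longrightarrow> S = F)"

lemma overlap_connectedD: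
  assumes "overlap_connected F" "S \<subseteq> F" "X0 \<in> S"
    and "\<And>X Y. X \<in> S \<Longrightarrow> Y \<in> F \<Longrightarrow> overlap X Y \<Longrightarrow> Y \<in> S"
  shows "S = F"
  using assms unfolding overlap_connected_def by blast

lemma overlap_commute: "overlap A B \<longleftrightarrow> overlap B A"
  unfolding overlap_def by blast

lemma path_overlap_connected:
  assumes step: "\<And>c. a \<le> c \<Longrightarrow> c < b \<Longrightarrow> overlap (R c) (R (Suc c))"
  shows "overlap_connected (R ` {a..b})"
  unfolding overlap_connected_def
proof (intro allI impI)
  fix S assume S: "S \<subseteq> R ` {a..b}" "S \<noteq> {}"
    and closed: "\<forall>X\<in>S. \<forall>Y\<in>R ` {a..b}. overlap X Y \<longrightarrow> Y \<in> S"
  obtain c0 where c0: "c0 \<in> {a..b}" "R c0 \<in> S" using S by blast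
  have up: "R d \<in> S" if "c0 \<le> d" "d \<le> b" for d
    using that(1)
  proof (induction d rule: dec_induct)
    case base
    show ?case by (rule c0(2))
  next
    case (step n)
    then have "overlap (R n) (R (Suc n))" "R (Suc n) \<in> R ` {a..b}"
      using assms c0 that(2) by auto
    then show ?case using closed step.IH by blast
  qed
  have down: "R d \<in> S" if "a \<le> d" "d \<le> c0" for d
    using that(2)
  proof (induction d rule: inc_induct)
    case base
    show ?case by (rule c0(2))
  next
    case (step n)
    then have "overlap (R n) (R (Suc n))" "R n \<in> R ` {a..b}"
      using assms c0 that(1) by auto
    then have "overlap (R (Suc n)) (R n)" "R n \<in> R ` {a..b}"
      using overlap_commute by blast+
    then show ?case using closed step.IH by blast
  qed
  have "R d \<in> S" if "d \<in> {a..b}" for d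
    using that up down by (cases "c0 \<le> d") auto
  then show "S = R ` {a..b}" using S(1) by blast
qed

lemma consecutive_Union:
  assumes conn: "overlap_connected F" and cons: "\<forall>X\<in>F. consecutive f U X"
  shows "consecutive f U (\<Union>F)"
  unfolding consecutive_def
proof (intro ballI impI)
  fix x y c assume xyc: "x \<in> \<Union>F" "y \<in> \<Union>F" "c \<in> U" "f x \<le> f c \<and> f c \<le> f y"
  obtain X0 where X0: "X0 \<in> F" "x \<in> X0" using xyc by blast
  define between where "between u t \<longleftrightarrow> f x \<le> f t \<and> f t \<le> f u \<or> f u \<le> f t \<and> f t \<le> f x" for u t
  have between_in: "t \<in> X" if "X \<in> F" "x \<in> X" "u \<in> X" "t \<in> U" "between u t" for X u t
    using consecutive_either[of f U X x u t] that cons unfolding between_def by blast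
  define S where "S = {X\<in>F. \<forall>u\<in>X. \<forall>t\<in>U. between u t \<longrightarrow> t \<in> \<Union>F}"
  have "S = F"
  proof (rule overlap_connectedD[OF conn])
    show "S \<subseteq> F" unfolding S_def by blast
    show "X0 \<in> S" unfolding S_def using X0 between_in by blast
  next
    fix X Y assume XY: "X \<in> S" "Y \<in> F" "overlap X Y"
    then obtain z where z: "z \<in> X" "z \<in> Y" unfolding overlap_def by blast
    have "t \<in> \<Union>F" if "u \<in> Y" "t \<in> U" "between u t" for u t
    proof (cases "between z t")
      case True
      then show ?thesis using XY(1) z(1) that(2) unfolding S_def by blast
    next
      case False
      then have "f z \<le> f t \<and> f t \<le> f u \<or> f u \<le> f t \<and> f t \<le> f z"
        using that(3) unfolding between_def by auto
      then have "t \<in> Y" using consecutive_either[of f U Y z u t] cons XY(2) z(2) that(1,2) by blast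
      then show ?thesis using XY(2) by blast
    qed
    then show "Y \<in> S" unfolding S_def using XY(2) by blast
  qed
  moreover obtain Y0 where "Y0 \<in> F" "y \<in> Y0" using xyc by blast
  ultimately have "\<forall>t\<in>U. between y t \<longrightarrow> t \<in> \<Union>F" unfolding S_def by blast
  moreover have "between y c" unfolding between_def using xyc by blast
  ultimately show "c \<in> \<Union>F" using xyc by blast
qed

lemma Union_no_overlap:
  assumes conn: "overlap_connected F" and "\<forall>X\<in>F. \<not> overlap Y X"
  shows "\<not> overlap Y (\<Union>F)"
proof
  assume ov: "overlap Y (\<Union>F)"
  then obtain X0 where X0: "X0 \<in> F" "Y \<inter> X0 \<noteq> {}" unfolding overlap_def by blast
  show False
  proof (cases "\<exists>X\<in>F. X \<subseteq> Y")
    case True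
    then obtain X1 where X1: "X1 \<in> F" "X1 \<subseteq> Y" by blast
    have "{X\<in>F. X \<subseteq> Y} = F"
    proof (rule overlap_connectedD[OF conn])
      fix X X' assume "X \<in> {X \<in> F. X \<subseteq> Y}" "X' \<in> F" "overlap X X'"
      then show "X' \<in> {X \<in> F. X \<subseteq> Y}" using assms(2) unfolding overlap_def by blast
    qed (use X1 in auto)
    then show False using ov unfolding overlap_def by blast
  next
    case False
    then have "Y \<subseteq> X0" using assms(2) X0 unfolding overlap_def by blast
    then show False using ov X0(1) unfolding overlap_def by blast
  qed
qed

lemma Union_inside:
  assumes conn: "overlap_connected F" and "\<forall>X\<in>F. \<not> overlap X V" and "X0 \<in> F" "X0 \<subseteq> V"
  shows "\<Union>F \<subseteq> V"
proof -
  have "{X\<in>F. X \<subseteq> V} = F"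
  proof (rule overlap_connectedD[OF conn])
    fix X X' assume "X \<in> {X \<in> F. X \<subseteq> V}" "X' \<in> F" "overlap X X'"
    then show "X' \<in> {X \<in> F. X \<subseteq> V}" using assms(2) unfolding overlap_def by blast
  qed (use assms(3,4) in auto)
  then show ?thesis by blast
qed

lemma finite_min_element:
  fixes f :: "'a \<Rightarrow> 'b::linorder"
  assumes "finite S" "S \<noteq> {}"
  obtains m where "m \<in> S" "\<forall>x\<in>S. f m \<le> f x"
proof -
  have "Min (f ` S) \<in> f ` S" using assms by simp
  then obtain m where "m \<in> S" "f m = Min (f ` S)" by (metis imageE)
  then show thesis using that assms by simp
qed

lemma finite_max_element:
  fixes f :: "'a \<Rightarrow> 'b::linorder"
  assumes "finite S" "S \<noteq> {}"
  obtains m where "m \<in> S" "\<forall>x\<in>S. f x \<le> f m"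
proof -
  have "Max (f ` S) \<in> f ` S" using assms by simp
  then obtain m where "m \<in> S" "f m = Max (f ` S)" by (metis imageE)
  then show thesis using that assms by simp
qed

lemma splice_at_member:
  assumes "wm \<in> W" "W \<subseteq> U" "consecutive g U X" "X \<inter> W = {} \<or> W \<subseteq> X"
  shows "consecutive (splice g W (g wm) h) U X"
  using assms(4)
proof
  assume disj: "X \<inter> W = {}"
  have "\<not> (g x \<le> g wm \<and> g wm < g y)" if "x \<in> X" "y \<in> X" for x y
  proof
    assume "g x \<le> g wm \<and> g wm < g y"
    then have "wm \<in> X" using consecutiveD[OF assms(3) that, of wm] assms(1,2) by auto
    then show False using disj assms(1) by blast
  qed
  then show ?thesis
    using splice_disjoint[OF disj consecutive_subset[OF assms(3)]] unfolding straddles_def by blast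
next
  assume sup: "W \<subseteq> X"
  have wm: "wm \<in> X" "wm \<in> U" using assms(1,2) sup by auto
  have "\<not> (g x \<le> g c \<and> g c \<le> g wm) \<and> \<not> (g wm < g c \<and> g c \<le> g x)"
    if "x \<in> X - W" "c \<in> U - W - X" for x c
  proof -
    have "\<not> (g x \<le> g c \<and> g c \<le> g wm)"
      using consecutiveD[OF assms(3), of x wm c] that wm by auto
    moreover have "\<not> (g wm < g c \<and> g c \<le> g x)"
      using consecutiveD[OF assms(3), of wm x c] that wm by auto
    ultimately show ?thesis by blast
  qed
  then show ?thesis
    using splice_containing[OF sup consecutive_subset[OF assms(3)]] by blast
qed

(* If no row overlaps W, then W can be added to a C1P set: contract W into a block. *)
lemma C1P_insert_block:
  assumes U: "finite U" and H: "\<forall>X\<in>H. X \<subseteq> U" and W: "W \<subseteq> U" and C: "C1P U H"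
    and nov: "\<forall>X\<in>H. \<not> overlap X W"
  shows "C1P U (insert W H)"
proof -
  obtain g :: "'a \<Rightarrow> int" where g: "inj_on g U" "\<forall>X\<in>H. consecutive g U X"
    using C1P_int_order[OF C] by blast
  show ?thesis
  proof (cases "W = {}")
    case True
    then have "consecutive g U W" unfolding consecutive_def by blast
    then show ?thesis using C1P_by_order[OF U g(1), of "insert W H"] g(2) H W by blast
  next
    case False
    then obtain wm where wm: "wm \<in> W" by blast
    define ord where "ord = splice g W (g wm) g"
    have inj: "inj_on ord U"
      unfolding ord_def by (rule splice_inj[OF g(1) inj_on_subset[OF g(1) W]])
    have "consecutive ord U W"
      unfolding ord_def by (rule splice_inside) (auto simp: consecutive_def)
    moreover have "consecutive ord U X" if "X \<in> H" for X
    proof -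
      have X: "consecutive g U X" using g(2) that by blast
      have "X \<inter> W = {} \<or> W \<subseteq> X \<or> X \<subseteq> W" using nov that unfolding overlap_def by blast
      then show ?thesis
      proof (elim disjE)
        assume "X \<subseteq> W"
        then show ?thesis unfolding ord_def
          by (rule splice_inside) (use consecutive_subset[OF X] W in blast)
      next
        assume "X \<inter> W = {}"
        then show ?thesis unfolding ord_def using splice_at_member[OF wm W X] by blast
      next
        assume "W \<subseteq> X"
        then show ?thesis unfolding ord_def using splice_at_member[OF wm W X] by blast
      qed
    qed
    ultimately show ?thesis using C1P_by_order[OF U inj, of "insert W H"] H W by blast
  qed
qed

lemma crossing_sides:
  fixes g :: "'c \<Rightarrow> 'b::linorder"
  assumes "W \<subseteq> U" "Z \<subseteq> U" "consecutive g U W" "consecutive g U Z" "overlap Z W"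
  shows "(\<forall>z\<in>Z - W. \<forall>w\<in>W. g z < g w) \<or> (\<forall>z\<in>Z - W. \<forall>w\<in>W. g w < g z)"
proof (rule ccontr)
  assume "\<not> ?thesis"
  then obtain z1 z2 w1 w2 where zw: "z1 \<in> Z - W" "z2 \<in> Z - W" "w1 \<in> W" "w2 \<in> W"
    "\<not> g z1 < g w1" "\<not> g w2 < g z2" by blast
  have "\<forall>w\<in>W. g w < g z1" "\<forall>w\<in>W. g z2 < g w"
    using consecutive_outside[OF assms(3), of z1] consecutive_outside[OF assms(3), of z2] zw assms(2)
    by auto
  then have "W \<subseteq> Z"
    using consecutive_between[OF assms(4), of z2 z1] zw assms(1) by blast
  then show False using assms(5) unfolding overlap_def by blast
qed

lemma orient_crossing:
  fixes g :: "'c \<Rightarrow> int"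
  assumes "inj_on g U" "W \<subseteq> U" "Z \<subseteq> U" "consecutive g U W" "consecutive g U Z" "overlap Z W"
  obtains g' :: "'c \<Rightarrow> int" where "inj_on g' U" "\<And>X. consecutive g' U X \<longleftrightarrow> consecutive g U X"
    "\<forall>z\<in>Z - W. \<forall>w\<in>W. g' z < g' w"
  using crossing_sides[OF assms(2-6)]
proof
  assume "\<forall>z\<in>Z - W. \<forall>w\<in>W. g z < g w"
  then show thesis using that[of g] assms(1) by blast
next
  assume "\<forall>z\<in>Z - W. \<forall>w\<in>W. g w < g z"
  then show thesis using that[of "\<lambda>c. - g c"] inj_on_reverse[OF assms(1)] by simp
qed

(* Substitution when Z crosses W from the left: W becomes a block ordered by h, placed at
   its leftmost column, and h puts the columns of Z first. *)
lemma C1P_substitute_crossing: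
  fixes g h :: "'c \<Rightarrow> int"
  assumes U: "finite U" and W: "W \<subseteq> U" and Z: "Z \<subseteq> U" "consecutive g U Z"
    and inj: "inj_on g U" "inj_on h W"
    and G: "\<forall>Y\<in>G. Y \<subseteq> U \<and> consecutive g U Y \<and> (W \<subseteq> Y \<or> Y \<inter> W = {})"
    and F: "\<forall>X\<in>F. X \<subseteq> W \<and> consecutive h W X"
    and ov: "overlap Z W" and left: "\<forall>z\<in>Z - W. \<forall>w\<in>W. g z < g w"
    and prefix: "\<forall>w\<in>Z \<inter> W. \<forall>w'\<in>W - Z. h w < h w'"
  shows "C1P U (insert Z (F \<union> G))"
proof -
  have "finite W" "W \<noteq> {}" using finite_subset[OF W U] ov unfolding overlap_def by auto
  then obtain wm where wm: "wm \<in> W" "\<forall>w\<in>W. g wm \<le> g w" by (rule finite_min_element)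
  define ord where "ord = splice g W (g wm) h"
  have "inj_on ord U" unfolding ord_def by (rule splice_inj[OF inj])
  have consF: "consecutive ord U X" if "X \<in> F" for X
    unfolding ord_def by (rule splice_inside) (use F that in auto)
  have consG: "consecutive ord U Y" if "Y \<in> G" for Y
    unfolding ord_def by (rule splice_at_member[OF wm(1) W]) (use G that in auto)
  obtain w1 where w1: "w1 \<in> Z" "w1 \<in> W" using ov unfolding overlap_def by blast
  obtain z0 where z0: "z0 \<in> Z" "z0 \<notin> W" using ov unfolding overlap_def by blast
  have "g z0 \<le> g wm" "g wm \<le> g w1" using left z0 wm w1 by (auto intro: less_imp_le)
  then have wmZ: "wm \<in> Z" using consecutiveD[OF Z(2) z0(1) w1(1)] wm(1) W by blast
  have consZ: "consecutive ord U Z" unfolding ord_def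
  proof (rule splice_crossing)
    show "consecutive g (U - W) Z" using consecutive_subset[OF Z(2)] by blast
    show "\<forall>x\<in>Z - W. g x \<le> g wm" using left wm(1) by (auto intro: less_imp_le)
    show "\<forall>x\<in>Z - W. \<forall>c\<in>U - W - Z. \<not> (g x \<le> g c \<and> g c \<le> g wm)"
    proof (intro ballI notI)
      fix x c assume "x \<in> Z - W" "c \<in> U - W - Z" "g x \<le> g c \<and> g c \<le> g wm"
      then show False using consecutiveD[OF Z(2) _ wmZ, of x c] by blast
    qed
  qed (rule prefix)
  have "\<forall>X\<in>insert Z (F \<union> G). consecutive ord U X" using consF consG consZ by blast
  moreover have "\<forall>X\<in>insert Z (F \<union> G). X \<subseteq> U" using F G Z W by blast
  ultimately show ?thesis using C1P_by_order[OF U \<open>inj_on ord U\<close>] by blast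
qed

lemma C1P_substitute_nested:
  fixes g f :: "'c \<Rightarrow> int"
  assumes U: "finite U" and inj: "inj_on g U" "inj_on f U" and W: "W \<subseteq> U" and Z: "Z \<subseteq> U"
    and G: "\<forall>Y\<in>G. Y \<subseteq> U \<and> consecutive g U Y \<and> (W \<subseteq> Y \<or> Y \<inter> W = {})"
    and F: "\<forall>X\<in>F. X \<subseteq> W \<and> consecutive f U X"
    and consZ: "consecutive g U Z" "consecutive f U Z" and nov: "\<not> overlap Z W"
  shows "C1P U (insert Z (F \<union> G))"
proof (cases "W = {}")
  case True
  then have "X = {}" if "X \<in> F" for X using F that by blast
  moreover have "consecutive g U {}" unfolding consecutive_def by blast
  ultimately have "\<forall>X\<in>insert Z (F \<union> G). consecutive g U X" using G consZ(1) by auto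
  moreover have "\<forall>X\<in>insert Z (F \<union> G). X \<subseteq> U" using F G Z W by blast
  ultimately show ?thesis by (rule C1P_by_order[OF U inj(1)])
next
  case False
  then obtain wm where wm: "wm \<in> W" by blast
  define ord where "ord = splice g W (g wm) f"
  have inj_ord: "inj_on ord U"
    unfolding ord_def by (rule splice_inj[OF inj(1) inj_on_subset[OF inj(2) W]])
  have inside: "consecutive ord U X" if "X \<subseteq> W" "consecutive f U X" for X
    unfolding ord_def using that(1) consecutive_subset[OF that(2) W] by (rule splice_inside)
  have outside: "consecutive ord U Y" if "consecutive g U Y" "W \<subseteq> Y \<or> Y \<inter> W = {}" for Y
    unfolding ord_def using splice_at_member[OF wm W that(1)] that(2) by blast
  have "\<forall>X\<in>insert Z (F \<union> G). consecutive ord U X"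
  proof
    fix X assume X: "X \<in> insert Z (F \<union> G)"
    consider "X = Z" "Z \<subseteq> W" | "X = Z" "W \<subseteq> Z \<or> Z \<inter> W = {}" | "X \<in> F" | "X \<in> G"
      using X nov unfolding overlap_def by blast
    then show "consecutive ord U X"
    proof cases
      case 1
      then show ?thesis using inside[of Z] consZ(2) by blast
    next
      case 2
      then show ?thesis using outside[of Z] consZ(1) by blast
    next
      case 3
      then show ?thesis using inside F by blast
    next
      case 4
      then show ?thesis using outside G by blast
    qed
  qed
  moreover have "\<forall>X\<in>insert Z (F \<union> G). X \<subseteq> U" using F G Z W by blast
  ultimately show ?thesis by (rule C1P_by_order[OF U inj_ord])
qed

lemma C1P_substitute:
  fixes g f :: "'c \<Rightarrow> int"
  assumes U: "finite U" and inj: "inj_on g U" "inj_on f U" and W: "W \<subseteq> U" and Z: "Z \<subseteq> U"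
    and G: "\<forall>Y\<in>G. Y \<subseteq> U \<and> consecutive g U Y \<and> (W \<subseteq> Y \<or> Y \<inter> W = {})"
    and F: "\<forall>X\<in>F. X \<subseteq> W \<and> consecutive f U X"
    and consW: "consecutive g U W" "consecutive f U W"
    and consZ: "consecutive g U Z" "consecutive f U Z"
  shows "C1P U (insert Z (F \<union> G))"
proof (cases "overlap Z W")
  case False
  then show ?thesis by (rule C1P_substitute_nested[OF U inj W Z G F consZ])
next
  case ov: True
  obtain f' :: "'c \<Rightarrow> int" where f': "inj_on f' U" "\<And>X. consecutive f' U X \<longleftrightarrow> consecutive f U X"
      "\<forall>w\<in>W - Z. \<forall>z\<in>Z. f' w < f' z"
    using orient_crossing[OF inj(2) Z W consZ(2) consW(2)] ov overlap_commute by blast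
  define h where "h c = - f' c" for c
  have "inj_on h W" using inj_on_reverse[OF inj_on_subset[OF f'(1) W]] unfolding h_def .
  moreover have "\<forall>X\<in>F. X \<subseteq> W \<and> consecutive h W X"
  proof
    fix X assume "X \<in> F"
    then have "X \<subseteq> W" "consecutive f' U X" using F f'(2) by auto
    then show "X \<subseteq> W \<and> consecutive h W X" unfolding h_def using consecutive_subset[OF _ W] by simp
  qed
  moreover have "\<forall>w\<in>Z \<inter> W. \<forall>w'\<in>W - Z. h w < h w'" using f'(3) unfolding h_def by fastforce
  moreover obtain g' :: "'c \<Rightarrow> int" where g': "inj_on g' U"
      "\<And>X. consecutive g' U X \<longleftrightarrow> consecutive g U X" "\<forall>z\<in>Z - W. \<forall>w\<in>W. g' z < g' w"
    using orient_crossing[OF inj(1) W Z consW(1) consZ(1) ov] by blast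
  ultimately show ?thesis
    using C1P_substitute_crossing[OF U W Z _ g'(1), of h G F] G consZ(1) ov by (simp add: g'(2))
qed

(* Inserting W as a block right after the last column zs of Z outside W, with the columns of
   Z first inside the block, succeeds under conditions on the rows that contain W or avoid it. *)
lemma C1P_block_after:
  fixes g :: "'c \<Rightarrow> int"
  assumes U: "finite U" and inj: "inj_on g U" and W: "W \<subseteq> U" and Z: "Z \<subseteq> U" "consecutive g U Z"
    and G: "\<forall>Y\<in>G. Y \<subseteq> U \<and> consecutive g U Y" and nested: "\<forall>Y\<in>G. W \<subseteq> Y \<or> Y \<inter> W = {}"
    and zs: "zs \<in> Z - W" and zmax: "\<forall>z\<in>Z - W. g z \<le> g zs"
    and disj: "\<forall>Y\<in>G. Y \<inter> W = {} \<longrightarrow> \<not> straddles g Y (g zs)"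
    and cont: "\<forall>Y\<in>G. W \<subseteq> Y \<longrightarrow>
      (\<forall>x\<in>Y - W. \<forall>c\<in>U - W - Y. \<not> (g x \<le> g c \<and> g c \<le> g zs) \<and> \<not> (g zs < g c \<and> g c \<le> g x))"
  shows "C1P U (insert W (insert Z G))"
proof -
  define h where "h c = (c \<notin> Z, g c)" for c
  define ord where "ord = splice g W (g zs) h"
  have "inj_on h W" using inj_on_subset[OF inj W] unfolding h_def inj_on_def by simp
  then have inj_ord: "inj_on ord U" unfolding ord_def by (rule splice_inj[OF inj])
  have consW: "consecutive ord U W" unfolding ord_def
    by (rule splice_inside) (auto simp: consecutive_def)
  have consZ: "consecutive ord U Z" unfolding ord_def
  proof (rule splice_crossing)
    show "consecutive g (U - W) Z" using consecutive_subset[OF Z(2)] by blast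
    show "\<forall>x\<in>Z - W. g x \<le> g zs" by (rule zmax)
    show "\<forall>x\<in>Z - W. \<forall>c\<in>U - W - Z. \<not> (g x \<le> g c \<and> g c \<le> g zs)"
    proof (intro ballI notI)
      fix x c assume "x \<in> Z - W" "c \<in> U - W - Z" "g x \<le> g c \<and> g c \<le> g zs"
      then show False using consecutiveD[OF Z(2), of x zs c] zs by blast
    qed
    show "\<forall>w\<in>Z \<inter> W. \<forall>w'\<in>W - Z. h w < h w'" unfolding h_def by simp
  qed
  have consG: "consecutive ord U Y" if "Y \<in> G" for Y
  proof -
    have "consecutive g U Y" using G that by blast
    then have Y: "consecutive g (U - W) Y" by (rule consecutive_subset) blast
    have "W \<subseteq> Y \<or> Y \<inter> W = {}" using nested that by blast
    then show ?thesis
    proof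
      assume sup: "W \<subseteq> Y"
      show ?thesis unfolding ord_def
        by (rule splice_containing[OF sup Y]) (use cont that sup in blast)
    next
      assume disj': "Y \<inter> W = {}"
      show ?thesis unfolding ord_def
        by (rule splice_disjoint[OF disj' Y]) (use disj that disj' in blast)
    qed
  qed
  have "\<forall>X\<in>insert W (insert Z G). consecutive ord U X" using consW consZ consG by blast
  moreover have "\<forall>X\<in>insert W (insert Z G). X \<subseteq> U" using G Z W by blast
  ultimately show ?thesis by (rule C1P_by_order[OF U inj_ord])
qed

lemma consecutive_trapped:
  fixes g :: "'c \<Rightarrow> 'b::linorder"
  assumes "consecutive g U Y" "a \<in> U - Y" "b \<in> U - Y" "v \<in> Y" "g a < g v" "g v < g b"
  shows "\<forall>u\<in>Y. g a < g u \<and> g u < g b"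
proof -
  have "\<forall>u\<in>Y. g a < g u" using consecutive_outside[OF assms(1), of a] assms(2,4,5) by force
  moreover have "\<forall>u\<in>Y. g u < g b" using consecutive_outside[OF assms(1), of b] assms(3,4,6) by force
  ultimately show ?thesis by blast
qed

lemma straddler_after_common:
  fixes g :: "'c \<Rightarrow> int"
  assumes Y: "Y \<subseteq> U" "consecutive g U Y" "Y \<inter> W = {}" "straddles g Y (g zs)"
    and Z: "Z \<subseteq> U" "consecutive g U Z" and zs: "zs \<in> Z - W" "\<forall>z\<in>Z - W. g z \<le> g zs"
    and w1: "w1 \<in> Z" "w1 \<in> W"
  shows "\<forall>u\<in>Y. g w1 < g u"
proof -
  obtain x y where xy: "x \<in> Y" "y \<in> Y" "g x \<le> g zs" "g zs < g y"
    using Y(4) unfolding straddles_def by blast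
  have "w1 \<in> U - Y" using w1 Z(1) Y(3) by blast
  then consider "\<forall>u\<in>Y. g u < g w1" | "\<forall>u\<in>Y. g w1 < g u"
    using consecutive_outside[OF Y(2)] by blast
  then show ?thesis
  proof cases
    case 1
    then have "y \<in> Z" using consecutive_between[OF Z(2), of zs w1 y] zs(1) w1(1) xy Y(1) by blast
    then have "g y \<le> g zs" using zs(2) xy(2) Y(3) by blast
    then show ?thesis using xy(4) by simp
  qed
qed

lemma containing_rows_after_max:
  fixes g :: "'c \<Rightarrow> int"
  assumes Y: "consecutive g U Y" "W \<subseteq> Y"
    and Z: "consecutive g U Z" and zs: "zs \<in> Z - W" "\<forall>z\<in>Z - W. g z \<le> g zs"
    and w1: "w1 \<in> Z" "w1 \<in> W" and w0: "w0 \<in> W" "\<forall>z\<in>Z. g z < g w0"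
  shows "\<forall>x\<in>Y - W. \<forall>c\<in>U - W - Y. \<not> (g x \<le> g c \<and> g c \<le> g zs) \<and> \<not> (g zs < g c \<and> g c \<le> g x)"
proof (intro ballI conjI notI)
  fix x c assume x: "x \<in> Y - W" and c: "c \<in> U - W - Y"
  have inY: "w0 \<in> Y" "w1 \<in> Y" using w0 w1 Y(2) by auto
  {
    assume "g x \<le> g c \<and> g c \<le> g zs"
    moreover have "g zs < g w0" using w0 zs by blast
    ultimately have "c \<in> Y" using consecutiveD[OF Y(1), of x w0 c] x c inY by simp
    then show False using c by blast
  next
    assume between: "g zs < g c \<and> g c \<le> g x"
    have "c \<notin> Z" using zs(2) c between by force
    then have "g w1 < g c"
      using consecutiveD[OF Z, of zs w1 c] zs(1) w1(1) c between by force
    then have "c \<in> Y" using consecutiveD[OF Y(1), of w1 x c] x c inY between by simp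
    then show False using c by blast
  }
qed

(* When some row contains W and w0 comes after Z, no row avoiding W straddles zs: such a
   row would be trapped between w1 and w0, and by connectivity so would the row containing W. *)
lemma no_straddler_below_container:
  fixes g :: "'c \<Rightarrow> int"
  assumes conn: "overlap_connected G" and G: "\<forall>Y\<in>G. Y \<subseteq> U \<and> consecutive g U Y"
    and nested: "\<forall>Y\<in>G. W \<subseteq> Y \<or> Y \<inter> W = {}" and Y0: "Y0 \<in> G" "W \<subseteq> Y0"
    and W: "W \<subseteq> U" and Z: "Z \<subseteq> U" "consecutive g U Z"
    and zs: "zs \<in> Z - W" "\<forall>z\<in>Z - W. g z \<le> g zs"
    and w1: "w1 \<in> Z" "w1 \<in> W" and w0: "w0 \<in> W" "\<forall>z\<in>Z. g z < g w0"
  shows "\<forall>Y\<in>G. Y \<inter> W = {} \<longrightarrow> \<not> straddles g Y (g zs)"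
proof (intro ballI impI notI)
  fix Y assume Y: "Y \<in> G" "Y \<inter> W = {}" and str: "straddles g Y (g zs)"
  have consY: "Y \<subseteq> U" "consecutive g U Y" using G Y(1) by auto
  have out: "w1 \<in> U - Y" "w0 \<in> U - Y" using w1 w0 W Y(2) by auto
  obtain x where x: "x \<in> Y" "g x \<le> g zs" using str unfolding straddles_def by blast
  have "g w1 < g x" using straddler_after_common[OF consY Y(2) str Z zs w1] x(1) by blast
  moreover have "g x < g w0" using x(2) w0 zs by force
  ultimately have trapped: "\<forall>u\<in>Y. g w1 < g u \<and> g u < g w0"
    using consecutive_trapped[OF consY(2) out x(1)] by blast
  define S where "S = {Y'\<in>G. Y' \<inter> W = {} \<and> (\<forall>u\<in>Y'. g w1 < g u \<and> g u < g w0)}"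
  have "S = G"
  proof (rule overlap_connectedD[OF conn])
    show "S \<subseteq> G" unfolding S_def by blast
    show "Y \<in> S" unfolding S_def using Y trapped by blast
  next
    fix Y1 Y2 assume H: "Y1 \<in> S" "Y2 \<in> G" "overlap Y1 Y2"
    have Y1: "Y1 \<subseteq> U" "\<forall>u\<in>Y1. g w1 < g u \<and> g u < g w0" using H(1) G unfolding S_def by auto
    have Y2: "Y2 \<subseteq> U" "consecutive g U Y2" using G H(2) by auto
    have disj2: "Y2 \<inter> W = {}"
    proof (rule ccontr)
      assume "Y2 \<inter> W \<noteq> {}"
      then have "w0 \<in> Y2" "w1 \<in> Y2" using nested H(2) w0 w1 by auto
      then have "Y1 \<subseteq> Y2" using consecutive_between[OF Y2(2)] Y1 by blast
      then show False using H(3) unfolding overlap_def by blast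
    qed
    obtain v where v: "v \<in> Y1" "v \<in> Y2" using H(3) unfolding overlap_def by blast
    have "w1 \<in> U - Y2" "w0 \<in> U - Y2" using w1 w0 W disj2 by auto
    then have "\<forall>u\<in>Y2. g w1 < g u \<and> g u < g w0"
      using consecutive_trapped[OF Y2(2) _ _ v(2)] Y1(2) v(1) by blast
    then show "Y2 \<in> S" unfolding S_def using H(2) disj2 by blast
  qed
  then show False using Y0 w1 unfolding S_def by blast
qed

(* When all rows avoid W, the block fits after the last or (reversed) before the first
   column of Z - W: otherwise w1 would lie between two rows and hence in their union. *)
lemma no_straddler_on_one_side:
  fixes g :: "'c \<Rightarrow> int"
  assumes conn: "overlap_connected G" and G: "\<forall>Y\<in>G. Y \<subseteq> U \<and> consecutive g U Y"
    and disj: "\<forall>Y\<in>G. Y \<inter> W = {}" and Z: "Z \<subseteq> U" "consecutive g U Z"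
    and zs: "zs \<in> Z - W" "\<forall>z\<in>Z - W. g z \<le> g zs"
    and zl: "zl \<in> Z - W" "\<forall>z\<in>Z - W. g zl \<le> g z"
    and w1: "w1 \<in> Z" "w1 \<in> W"
  shows "(\<forall>Y\<in>G. \<not> straddles g Y (g zs)) \<or> (\<forall>Y\<in>G. \<not> straddles (\<lambda>c. - g c) Y (- g zl))"
proof (rule ccontr)
  assume "\<not> ?thesis"
  then obtain Y1 Y2 where Y1: "Y1 \<in> G" "straddles g Y1 (g zs)"
    and Y2: "Y2 \<in> G" "straddles (\<lambda>c. - g c) Y2 (- g zl)" by blast
  obtain x1 where x1: "x1 \<in> Y1" using Y1(2) unfolding straddles_def by blast
  obtain x2 where x2: "x2 \<in> Y2" using Y2(2) unfolding straddles_def by blast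
  have "\<forall>u\<in>Y1. g w1 < g u"
    using straddler_after_common[OF _ _ _ Y1(2) Z zs w1] G disj Y1(1) by blast
  moreover have "\<forall>u\<in>Y2. - g w1 < - g u"
    using straddler_after_common[of Y2 U "\<lambda>c. - g c", OF _ _ _ Y2(2) Z(1) _ _ _ w1] G disj Y2(1) Z(2) zl
    by simp
  ultimately have "g x2 < g w1" "g w1 < g x1" using x1 x2 by auto
  moreover have "consecutive g U (\<Union>G)" using consecutive_Union[OF conn] G by blast
  ultimately have "w1 \<in> \<Union>G"
    using consecutive_between[of g U "\<Union>G" x2 x1 w1] x1 x2 Y1(1) Y2(1) w1 Z(1) by blast
  then show False using disj w1(2) by blast
qed

lemma orient_outside:
  fixes g :: "'c \<Rightarrow> int"
  assumes "inj_on g U" "consecutive g U Z" "w0 \<in> U" "w0 \<notin> Z"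
  obtains g' :: "'c \<Rightarrow> int" where "inj_on g' U" "\<And>X. consecutive g' U X \<longleftrightarrow> consecutive g U X"
    "\<forall>z\<in>Z. g' z < g' w0"
  using consecutive_outside[OF assms(2-4)]
proof
  assume "\<forall>z\<in>Z. g z < g w0"
  then show thesis using that[of g] assms(1) by blast
next
  assume "\<forall>z\<in>Z. g w0 < g z"
  then show thesis using that[of "\<lambda>c. - g c"] inj_on_reverse[OF assms(1)] by simp
qed

(* Insertion of W when some row of G contains W: orient the ordering so that a column of
   W - Z follows Z, and place the block after the last column of Z - W. *)
lemma C1P_insert_block_below_container:
  fixes g :: "'c \<Rightarrow> int"
  assumes U: "finite U" and inj: "inj_on g U" and conn: "overlap_connected G"
    and G: "\<forall>Y\<in>G. Y \<subseteq> U \<and> consecutive g U Y" and nested: "\<forall>Y\<in>G. W \<subseteq> Y \<or> Y \<inter> W = {}"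
    and Y0: "Y0 \<in> G" "W \<subseteq> Y0" and W: "W \<subseteq> U" and Z: "Z \<subseteq> U" "consecutive g U Z"
    and ZW: "finite (Z - W)" "Z - W \<noteq> {}"
    and w1: "w1 \<in> Z" "w1 \<in> W" and w0: "w0 \<in> W" "\<forall>z\<in>Z. g z < g w0"
  shows "C1P U (insert W (insert Z G))"
proof -
  obtain zs where zs: "zs \<in> Z - W" "\<forall>z\<in>Z - W. g z \<le> g zs"
    using finite_max_element[OF ZW] by blast
  have disj: "\<forall>Y\<in>G. Y \<inter> W = {} \<longrightarrow> \<not> straddles g Y (g zs)"
    by (rule no_straddler_below_container[OF conn G nested Y0 W Z zs w1 w0])
  have cont: "\<forall>Y\<in>G. W \<subseteq> Y \<longrightarrow> (\<forall>x\<in>Y - W. \<forall>c\<in>U - W - Y.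
      \<not> (g x \<le> g c \<and> g c \<le> g zs) \<and> \<not> (g zs < g c \<and> g c \<le> g x))"
  proof (rule ballI, rule impI)
    fix Y assume "Y \<in> G" "W \<subseteq> Y"
    moreover have "consecutive g U Y" using G \<open>Y \<in> G\<close> by blast
    ultimately show "\<forall>x\<in>Y - W. \<forall>c\<in>U - W - Y.
        \<not> (g x \<le> g c \<and> g c \<le> g zs) \<and> \<not> (g zs < g c \<and> g c \<le> g x)"
      using containing_rows_after_max[OF _ _ Z(2) zs w1 w0] by blast
  qed
  show ?thesis by (rule C1P_block_after[OF U inj W Z G nested zs disj cont])
qed

(* Insertion of W when every row of G avoids W: the block fits after the last column of
   Z - W, or, in the reversed ordering, after its first column. *)
lemma C1P_insert_block_avoided:
  fixes g :: "'c \<Rightarrow> int"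
  assumes U: "finite U" and inj: "inj_on g U" and conn: "overlap_connected G"
    and G: "\<forall>Y\<in>G. Y \<subseteq> U \<and> consecutive g U Y" and disj: "\<forall>Y\<in>G. Y \<inter> W = {}"
    and W: "W \<subseteq> U" and Z: "Z \<subseteq> U" "consecutive g U Z"
    and ZW: "finite (Z - W)" "Z - W \<noteq> {}" and w1: "w1 \<in> Z" "w1 \<in> W"
  shows "C1P U (insert W (insert Z G))"
proof -
  have nested: "\<forall>Y\<in>G. W \<subseteq> Y \<or> Y \<inter> W = {}" using disj by blast
  have vacuous: "\<forall>Y\<in>G. W \<subseteq> Y \<longrightarrow> P Y" for P using disj w1(2) by blast
  have Gr: "\<forall>Y\<in>G. Y \<subseteq> U \<and> consecutive (\<lambda>c. - g c) U Y" using G by simp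
  have Zr: "consecutive (\<lambda>c. - g c) U Z" using Z(2) by simp
  obtain zs where zs: "zs \<in> Z - W" "\<forall>z\<in>Z - W. g z \<le> g zs"
    using finite_max_element[OF ZW] by blast
  obtain zl where zl: "zl \<in> Z - W" "\<forall>z\<in>Z - W. g zl \<le> g z"
    using finite_min_element[OF ZW] by blast
  from no_straddler_on_one_side[OF conn G disj Z zs zl w1]
  show ?thesis
  proof
    assume "\<forall>Y\<in>G. \<not> straddles g Y (g zs)"
    then show ?thesis by (intro C1P_block_after[OF U inj W Z G nested zs _ vacuous]) blast
  next
    assume "\<forall>Y\<in>G. \<not> straddles (\<lambda>c. - g c) Y (- g zl)"
    moreover have "\<forall>z\<in>Z - W. - g z \<le> - g zl" using zl by simp
    ultimately show ?thesis
      by (intro C1P_block_after[OF U inj_on_reverse[OF inj] W Z(1) Zr Gr nested zl(1) _ _ vacuous])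
        blast+
  qed
qed

lemma C1P_insert_nested_block:
  assumes U: "finite U" and G: "\<forall>Y\<in>G. Y \<subseteq> U" and conn: "overlap_connected G"
    and W: "W \<subseteq> U" and nested: "\<forall>Y\<in>G. W \<subseteq> Y \<or> Y \<inter> W = {}"
    and Z: "Z \<subseteq> U" and C: "C1P U (insert Z G)"
  shows "C1P U (insert W (insert Z G))"
proof (cases "overlap Z W")
  case False
  have "\<forall>X\<in>insert Z G. \<not> overlap X W" using False nested unfolding overlap_def by blast
  then show ?thesis using C1P_insert_block[OF U _ W C] G Z by blast
next
  case ov: True
  obtain g :: "'a \<Rightarrow> int" where g: "inj_on g U" "\<forall>X\<in>insert Z G. consecutive g U X"
    using C1P_int_order[OF C] by blast
  obtain w1 where w1: "w1 \<in> Z" "w1 \<in> W" using ov unfolding overlap_def by blast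
  obtain w0 where w0: "w0 \<in> W" "w0 \<notin> Z" using ov unfolding overlap_def by blast
  have ZW: "finite (Z - W)" "Z - W \<noteq> {}" using finite_subset[OF Z U] ov unfolding overlap_def by auto
  show ?thesis
  proof (cases "\<exists>Y0\<in>G. W \<subseteq> Y0")
    case True
    then obtain Y0 where Y0: "Y0 \<in> G" "W \<subseteq> Y0" by blast
    have "consecutive g U Z" "w0 \<in> U" using g(2) w0 W by auto
    then obtain g' :: "'a \<Rightarrow> int" where g': "inj_on g' U"
        "\<And>X. consecutive g' U X \<longleftrightarrow> consecutive g U X" "\<forall>z\<in>Z. g' z < g' w0"
      using orient_outside[OF g(1) _ _ w0(2)] by blast
    have "\<forall>Y\<in>G. Y \<subseteq> U \<and> consecutive g' U Y" "consecutive g' U Z" using G g(2) g'(2) by auto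
    then show ?thesis
      using C1P_insert_block_below_container[OF U g'(1) conn _ nested Y0 W Z _ ZW w1 w0(1) g'(3)]
      by blast
  next
    case False
    then have "\<forall>Y\<in>G. Y \<inter> W = {}" using nested by blast
    moreover have "\<forall>Y\<in>G. Y \<subseteq> U \<and> consecutive g U Y" "consecutive g U Z" using G g(2) by auto
    ultimately show ?thesis using C1P_insert_block_avoided[OF U g(1) conn _ _ W Z _ ZW w1] by blast
  qed
qed

lemma largest_member_absorbs:
  assumes connF: "overlap_connected F" and connG: "overlap_connected G"
    and M: "M \<in> F" "M \<noteq> {}" and G: "\<forall>Y\<in>G. finite Y \<and> card Y \<le> card M"
    and nov: "\<forall>Y\<in>G. \<not> overlap M Y" and cover: "\<Union>F \<subseteq> \<Union>G"
  shows "F = {M} \<and> \<Union>G \<subseteq> M"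
proof -
  have dich: "Y \<subseteq> M \<or> Y \<inter> M = {}" if "Y \<in> G" for Y
  proof -
    have "M \<subseteq> Y \<Longrightarrow> Y = M" using G that card_subset_eq[of Y M] card_mono[of Y M] by force
    then show ?thesis using nov that unfolding overlap_def by blast
  qed
  obtain Y1 where Y1: "Y1 \<in> G" "Y1 \<inter> M \<noteq> {}" using M cover by blast
  have "{Y\<in>G. Y \<subseteq> M} = G"
  proof (rule overlap_connectedD[OF connG])
    fix Y Y' assume "Y \<in> {Y \<in> G. Y \<subseteq> M}" "Y' \<in> G" "overlap Y Y'"
    then show "Y' \<in> {Y \<in> G. Y \<subseteq> M}" using dich unfolding overlap_def by blast
  qed (use Y1 dich in auto)
  then have GM: "\<Union>G \<subseteq> M" by blast
  have "{M} = F"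
  proof (rule overlap_connectedD[OF connF])
    fix X Y assume "X \<in> {M}" "Y \<in> F" "overlap X Y"
    then show "Y \<in> {M}" using cover GM unfolding overlap_def by blast
  qed (use M in auto)
  then show ?thesis using GM by blast
qed

lemma nonoverlapping_families_nest:
  assumes U: "finite U" and F: "\<forall>X\<in>F. X \<subseteq> U" and G: "\<forall>Y\<in>G. Y \<subseteq> U"
    and connF: "overlap_connected F" and connG: "overlap_connected G"
    and nov: "\<forall>X\<in>F. \<forall>Y\<in>G. \<not> overlap X Y"
  shows "(\<forall>Y\<in>G. \<Union>F \<subseteq> Y \<or> Y \<inter> \<Union>F = {}) \<or> (\<forall>X\<in>F. \<Union>G \<subseteq> X \<or> X \<inter> \<Union>G = {})"
proof (rule ccontr)
  assume "\<not> ?thesis"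
  then obtain Y0 X0 where Y0: "Y0 \<in> G" "\<not> \<Union>F \<subseteq> Y0" "Y0 \<inter> \<Union>F \<noteq> {}"
    and X0: "X0 \<in> F" "\<not> \<Union>G \<subseteq> X0" "X0 \<inter> \<Union>G \<noteq> {}" by blast
  have "\<forall>X\<in>F. \<not> overlap Y X" if "Y \<in> G" for Y using nov that unfolding overlap_def by blast
  then have novG: "\<forall>Y\<in>G. \<not> overlap Y (\<Union>F)" using Union_no_overlap[OF connF] by blast
  have novF: "\<forall>X\<in>F. \<not> overlap X (\<Union>G)"
    using Union_no_overlap[OF connG] nov by blast
  have "Y0 \<subseteq> \<Union>F" using novG Y0 unfolding overlap_def by blast
  then have GF: "\<Union>G \<subseteq> \<Union>F" by (rule Union_inside[OF connG novG Y0(1)])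
  have "X0 \<subseteq> \<Union>G" using novF X0 unfolding overlap_def by blast
  then have FG: "\<Union>F \<subseteq> \<Union>G" by (rule Union_inside[OF connF novF X0(1)])
  have fin: "finite X" if "X \<in> F \<union> G" for X
  proof -
    have "X \<subseteq> U" using F G that by blast
    then show ?thesis using U by (rule finite_subset)
  qed
  have "F \<union> G \<subseteq> Pow U" using F G by blast
  then have "finite (F \<union> G)" by (rule finite_subset) (simp add: U)
  moreover have "F \<union> G \<noteq> {}" using Y0(1) by blast
  ultimately obtain M where M: "M \<in> F \<union> G" "\<forall>X\<in>F \<union> G. card X \<le> card M"
    by (rule finite_max_element[where f = card])
  have "0 < card Y0" using fin Y0(1,3) by (auto simp: card_gt_0_iff)
  also have "card Y0 \<le> card M" using M(2) Y0(1) by blast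
  finally have "M \<noteq> {}" by auto
  have cardM: "\<forall>X\<in>F \<union> G. finite X \<and> card X \<le> card M" using M(2) fin by simp
  from M(1) show False
  proof
    assume MF: "M \<in> F"
    have "\<forall>Y\<in>G. \<not> overlap M Y" using nov MF by blast
    then have "F = {M} \<and> \<Union>G \<subseteq> M"
      using largest_member_absorbs[OF connF connG MF \<open>M \<noteq> {}\<close> _ _ FG] cardM by blast
    then show False using X0(1,2) by blast
  next
    assume MG: "M \<in> G"
    have "\<forall>X\<in>F. \<not> overlap M X" using nov MG unfolding overlap_def by blast
    then have "G = {M} \<and> \<Union>F \<subseteq> M"
      using largest_member_absorbs[OF connG connF MG \<open>M \<noteq> {}\<close> _ _ GF] cardM by blast
    then show False using Y0(1,2) by blast
  qed
qed

(* Gluing in the nested case: insert the union of F as a block, then substitute F. *)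
lemma glue_nested:
  assumes U: "finite U" and F: "\<forall>X\<in>F. X \<subseteq> U" and G: "\<forall>Y\<in>G. Y \<subseteq> U"
    and connF: "overlap_connected F" and connG: "overlap_connected G" and Z: "Z \<subseteq> U"
    and nested: "\<forall>Y\<in>G. \<Union>F \<subseteq> Y \<or> Y \<inter> \<Union>F = {}"
    and CF: "C1P U (insert Z F)" and CG: "C1P U (insert Z G)"
  shows "C1P U (insert Z (F \<union> G))"
proof -
  have W: "\<Union>F \<subseteq> U" using F by blast
  have "C1P U (insert (\<Union>F) (insert Z G))"
    by (rule C1P_insert_nested_block[OF U G connG W nested Z CG])
  then obtain g :: "'a \<Rightarrow> int"
    where g: "inj_on g U" "\<forall>X\<in>insert (\<Union>F) (insert Z G). consecutive g U X"
    by (rule C1P_int_order)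
  obtain f :: "'a \<Rightarrow> int" where f: "inj_on f U" "\<forall>X\<in>insert Z F. consecutive f U X"
    using C1P_int_order[OF CF] by blast
  have GG: "\<forall>Y\<in>G. Y \<subseteq> U \<and> consecutive g U Y \<and> (\<Union>F \<subseteq> Y \<or> Y \<inter> \<Union>F = {})"
    using G g(2) nested by blast
  have FF: "\<forall>X\<in>F. X \<subseteq> \<Union>F \<and> consecutive f U X" using f(2) by blast
  have "consecutive f U (\<Union>F)" using consecutive_Union[OF connF] f(2) by blast
  moreover have "consecutive g U (\<Union>F)" "consecutive g U Z" "consecutive f U Z" using g(2) f(2) by auto
  ultimately show ?thesis by (intro C1P_substitute[OF U g(1) f(1) W Z GG FF])
qed

lemma glue_C1P:
  assumes U: "finite U" and F: "\<forall>X\<in>F. X \<subseteq> U" and G: "\<forall>Y\<in>G. Y \<subseteq> U"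
    and connF: "overlap_connected F" and connG: "overlap_connected G"
    and nov: "\<forall>X\<in>F. \<forall>Y\<in>G. \<not> overlap X Y" and Z: "Z \<subseteq> U"
    and CF: "C1P U (insert Z F)" and CG: "C1P U (insert Z G)"
  shows "C1P U (insert Z (F \<union> G))"
  using nonoverlapping_families_nest[OF U F G connF connG nov]
proof
  assume "\<forall>Y\<in>G. \<Union>F \<subseteq> Y \<or> Y \<inter> \<Union>F = {}"
  then show ?thesis by (rule glue_nested[OF U F G connF connG Z _ CF CG])
next
  assume "\<forall>X\<in>F. \<Union>G \<subseteq> X \<or> X \<inter> \<Union>G = {}"
  then have "C1P U (insert Z (G \<union> F))" by (rule glue_nested[OF U G F connG connF Z _ CG CF])
  then show ?thesis by (simp add: Un_commute)
qed

lemma path_segment_connected: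
  fixes R :: "nat \<Rightarrow> 'c set"
  assumes path: "\<forall>a\<in>{1..k}. \<forall>b\<in>{1..k}. overlap (R a) (R b) \<longleftrightarrow> (a = b + 1 \<or> b = a + 1)"
    and "1 \<le> a" "b \<le> k"
  shows "overlap_connected (R ` {a..b})"
proof (rule path_overlap_connected)
  fix c assume "a \<le> c" "c < b"
  then have "c \<in> {1..k}" "Suc c \<in> {1..k}" using assms(2,3) by auto
  then show "overlap (R c) (R (Suc c))" using path by simp
qed

lemma remove_interior_row:
  fixes R :: "nat \<Rightarrow> 'c set"
  assumes U: "finite U" and rows: "\<forall>a\<in>{1..k}. R a \<subseteq> U" and Z: "Z \<subseteq> U"
    and path: "\<forall>a\<in>{1..k}. \<forall>b\<in>{1..k}. overlap (R a) (R b) \<longleftrightarrow> (a = b + 1 \<or> b = a + 1)"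
    and m: "1 \<le> i" "i < m" "m < j" "j \<le> k"
    and left: "C1P U (R ` {1..j - 1} \<union> {Z})" and right: "C1P U (R ` {i + 1..j} \<union> {Z})"
  shows "C1P U (R ` ({i..j} - {m}) \<union> {Z})"
proof -
  define F where "F = R ` {i..m - 1}"
  define G where "G = R ` {m + 1..j}"
  have "{i..j} - {m} = {i..m - 1} \<union> {m + 1..j}" using m by auto
  then have split: "R ` ({i..j} - {m}) \<union> {Z} = insert Z (F \<union> G)"
    unfolding F_def G_def by auto
  have "\<forall>X\<in>F. X \<subseteq> U" "\<forall>Y\<in>G. Y \<subseteq> U" using rows m unfolding F_def G_def by auto
  moreover have "overlap_connected F" "overlap_connected G"
    unfolding F_def G_def using path_segment_connected[OF path] m by auto
  moreover have "\<forall>X\<in>F. \<forall>Y\<in>G. \<not> overlap X Y"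
  proof (intro ballI)
    fix X Y assume "X \<in> F" "Y \<in> G"
    then obtain a b where "a \<in> {i..m - 1}" "b \<in> {m + 1..j}" "X = R a" "Y = R b"
      unfolding F_def G_def by blast
    then show "\<not> overlap X Y" using path m by auto
  qed
  moreover have "C1P U (insert Z F)"
    unfolding F_def by (rule C1P_subset[OF left]) (use m in auto)
  moreover have "C1P U (insert Z G)"
    unfolding G_def by (rule C1P_subset[OF right]) (use m in auto)
  ultimately show ?thesis unfolding split using glue_C1P[OF U _ _ _ _ _ Z] by blast
qed

lemma window_minimal:
  fixes R :: "nat \<Rightarrow> 'c set"
  assumes U: "finite U" and rows: "\<forall>a\<in>{1..k}. R a \<subseteq> U" and Z: "Z \<subseteq> U"
    and path: "\<forall>a\<in>{1..k}. \<forall>b\<in>{1..k}. overlap (R a) (R b) \<longleftrightarrow> (a = b + 1 \<or> b = a + 1)"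
    and ij: "1 \<le> i" "i \<le> j" "j \<le> k" and all: "C1P U (R ` {1..k})"
    and left: "C1P U (R ` {1..j - 1} \<union> {Z})" and right: "C1P U (R ` {i + 1..j} \<union> {Z})"
  shows "\<forall>T. T \<subset> R ` {i..j} \<union> {Z} \<longrightarrow> C1P U T"
proof (intro allI impI)
  fix T assume "T \<subset> R ` {i..j} \<union> {Z}"
  then obtain x where x: "x \<in> R ` {i..j} \<union> {Z}" "T \<subseteq> R ` {i..j} \<union> {Z} - {x}" by blast
  have "C1P U (R ` {i..j} \<union> {Z} - {x})"
  proof (cases "x = Z")
    case True
    have "R ` {i..j} \<union> {Z} - {x} \<subseteq> R ` {1..k}" using True ij by auto
    then show ?thesis by (rule C1P_subset[OF all])
  next
    case False
    then obtain m where m: "m \<in> {i..j}" "x = R m" using x(1) by blast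
    then have sub: "R ` {i..j} \<union> {Z} - {x} \<subseteq> R ` ({i..j} - {m}) \<union> {Z}" by auto
    have "i \<le> m" "m \<le> j" using m(1) by auto
    then consider "m = j" | "m = i" "i < j" | "i < m" "m < j"
      by (cases "m = j"; cases "m = i") auto
    then show ?thesis
    proof cases
      case 1
      then have "{i..j} - {m} \<subseteq> {1..j - 1}" using ij by auto
      then have "R ` ({i..j} - {m}) \<union> {Z} \<subseteq> R ` {1..j - 1} \<union> {Z}" by blast
      with sub have "R ` {i..j} \<union> {Z} - {x} \<subseteq> R ` {1..j - 1} \<union> {Z}" by (rule subset_trans)
      then show ?thesis by (rule C1P_subset[OF left])
    next
      case 2
      then have "{i..j} - {m} \<subseteq> {i + 1..j}" by auto
      then have "R ` ({i..j} - {m}) \<union> {Z} \<subseteq> R ` {i + 1..j} \<union> {Z}" by blast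
      with sub have "R ` {i..j} \<union> {Z} - {x} \<subseteq> R ` {i + 1..j} \<union> {Z}" by (rule subset_trans)
      then show ?thesis by (rule C1P_subset[OF right])
    next
      case 3
      have "C1P U (R ` ({i..j} - {m}) \<union> {Z})"
        by (rule remove_interior_row[OF U rows Z path ij(1) 3 ij(3) left right])
      then show ?thesis using sub by (rule C1P_subset)
    qed
  qed
  then show "C1P U T" using x(2) by (rule C1P_subset)
qed

theorem mainTheorem6:
  fixes U :: "'c set" and R :: "nat \<Rightarrow> 'c set" and Z :: "'c set"
    and k i j :: nat
  assumes "finite U"
    and "\<forall>a\<in>{1..k}. R a \<subseteq> U" and "Z \<subseteq> U"
    and "inj_on R {1..k}"
    and "\<forall>a\<in>{1..k}. \<forall>b\<in>{1..k}. overlap (R a) (R b) \<longleftrightarrow> (a = b + 1 \<or> b = a + 1)"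
    and "C1P U (R ` {1..k})"
    and "\<not> C1P U (R ` {1..k} \<union> {Z})"
    and "\<forall>S C. tucker_sub U (R ` {1..k} \<union> {Z}) S C \<longrightarrow> card S \<ge> 5"
    and "j = (LEAST j. \<not> C1P U (R ` {1..j} \<union> {Z}))"
    and "i = (GREATEST i. 1 \<le> i \<and> i \<le> j \<and> \<not> C1P U (R ` {i..j} \<union> {Z}))"
  shows "\<not> C1P U (R ` {i..j} \<union> {Z}) \<and>
         (\<forall>T. T \<subset> R ` {i..j} \<union> {Z} \<longrightarrow> C1P U T)"
proof -
  note U = assms(1) and rows = assms(2) and Z = assms(3) and path = assms(5)
  define bad where "bad a b \<longleftrightarrow> \<not> C1P U (R ` {a..b} \<union> {Z})" for a b
  have single: "\<not> bad a b" if "b < a" for a b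
    using C1P_singleton[OF U Z] that unfolding bad_def by simp
  have j_bad: "bad 1 j" unfolding assms(9) bad_def by (rule LeastI[of _ k]) (rule assms(7))
  have "j \<le> k" unfolding assms(9) by (rule Least_le) (rule assms(7))
  have j_least: "\<not> bad 1 j'" if "j' < j" for j'
    using not_less_Least[of j' "\<lambda>j. \<not> C1P U (R ` {1..j} \<union> {Z})"] that assms(9)
    unfolding bad_def by blast
  have "1 \<le> j" using single[of j 1] j_bad not_le by blast
  define P where "P i' \<longleftrightarrow> 1 \<le> i' \<and> i' \<le> j \<and> bad i' j" for i'
  have i_def: "i = (GREATEST i'. P i')" using assms(10) unfolding P_def bad_def .
  have bound: "P i' \<Longrightarrow> i' \<le> j" for i' unfolding P_def by simp
  have "P i" unfolding i_def using \<open>1 \<le> j\<close> j_bad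
    by (intro GreatestI_nat[of P 1 j] bound) (simp add: P_def)
  then have i: "1 \<le> i" "i \<le> j" "bad i j" unfolding P_def by auto
  have i_greatest: "\<not> P (i + 1)"
    using Greatest_le_nat[of P "i + 1" j] bound unfolding i_def by fastforce
  have "\<not> bad (i + 1) j" using i_greatest single[of j "i + 1"] unfolding P_def by auto
  moreover have "\<not> bad 1 (j - 1)" using j_least \<open>1 \<le> j\<close> by simp
  ultimately show ?thesis using window_minimal[OF U rows Z path i(1,2) \<open>j \<le> k\<close> assms(6)] i(3)
    unfolding bad_def by blast
qed

end
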